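(* Let $\pi$ be a representation of a normed $*$-algebra $A$ in a pre-Hilbert space $H$, and assume that $\pi$ is weakly continuous on $A_{sa}$. Then every operator $\pi(a)$ $(a\in A)$ is bounded, and $\|\pi(a)\|\le r_\sigma(a)$ for all $a\in A$.
   Context: All algebras are complex. A normed $*$-algebra is a complex algebra $A$ with an involution $a\mapsto a^*$ (conjugate linear, $(ab)^*=b^*a^*$, $a^{**}=a$) and a norm $|\cdot|$ with $|ab|\le|a||b|$; the involution need not be continuous. $A_{sa}=\{a\in A:a=a^*\}$, viewed as a real normed space. For $a\in A$, $r_\lambda(a):=\inf_{n\ge1}|a^n|^{1/n}$ and $r_\sigma(a):=r_\lambda(a^*a)^{1/2}$. A representation of $A$ in a (complex, not necessarily complete) pre-Hilbert space $H$ is an algebra homomorphism $\pi$ from $A$ into the algebra of all linear operators $H\to H$ such that $\langle\pi(a)x,y\rangle=\langle x,\pi(a^* )y\rangle$ for all $x,y\in H$, $a\in A$. $\pi$ is weakly continuous on $A_{sa}$ if for every $x\in H$ the functional $a\mapsto\langle\pi(a)x,x\rangle$ is continuous on $A_{sa}$ (with respect to the norm of $A$). *)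

theory Defs
  imports "HOL-Analysis.Analysis"
begin

text \<open>The carrier is a type 'a with a ring structure (not necessarily
unital), a norm that is submultiplicative (class real_normed_algebra), and in addition a
complex scalar multiplication smul compatible with the real one and with the norm.
The involution star need not be continuous.\<close>

definition complex_normed_algebra :: "(complex \<Rightarrow> 'a::real_normed_algebra \<Rightarrow> 'a) \<Rightarrow> bool" where
  "complex_normed_algebra smul \<longleftrightarrow>
     (\<forall>r a. smul (complex_of_real r) a = r *\<^sub>R a) \<and>
     (\<forall>c a b. smul c (a + b) = smul c a + smul c b) \<and>
     (\<forall>c d a. smul (c + d) a = smul c a + smul d a) \<and>
     (\<forall>c d a. smul (c * d) a = smul c (smul d a)) \<and>
     (\<forall>a. smul 1 a = a) \<and>
     (\<forall>c a b. smul c (a * b) = smul c a * b) \<and>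
     (\<forall>c a b. smul c (a * b) = a * smul c b) \<and>
     (\<forall>c a. norm (smul c a) = cmod c * norm a)"

definition normed_star_algebra ::
  "(complex \<Rightarrow> 'a::real_normed_algebra \<Rightarrow> 'a) \<Rightarrow> ('a \<Rightarrow> 'a) \<Rightarrow> bool" where
  "normed_star_algebra smul star \<longleftrightarrow>
     complex_normed_algebra smul \<and>
     (\<forall>a b. star (a + b) = star a + star b) \<and>
     (\<forall>c a. star (smul c a) = smul (cnj c) (star a)) \<and>
     (\<forall>a b. star (a * b) = star b * star a) \<and>
     (\<forall>a. star (star a) = a)"

definition self_adjoint_part :: "('a \<Rightarrow> 'a) \<Rightarrow> 'a set" where
  "self_adjoint_part star = {a. star a = a}"

text \<open>Powers a^n for n \<ge> 1 in a possibly non-unital algebra.\<close>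
fun apow :: "'a::times \<Rightarrow> nat \<Rightarrow> 'a" where
  "apow a 0 = a"   \<comment> \<open>junk value, only n \<ge> 1 is used\<close>
| "apow a (Suc 0) = a"
| "apow a (Suc (Suc n)) = a * apow a (Suc n)"

definition r_lambda :: "'a::real_normed_algebra \<Rightarrow> real" where
  "r_lambda a = (INF n\<in>{1..}. norm (apow a n) powr (1 / real n))"

definition r_sigma :: "('a \<Rightarrow> 'a) \<Rightarrow> 'a::real_normed_algebra \<Rightarrow> real" where
  "r_sigma star a = sqrt (r_lambda (star a * a))"

definition pre_hilbert :: "(complex \<Rightarrow> 'h::ab_group_add \<Rightarrow> 'h) \<Rightarrow> ('h \<Rightarrow> 'h \<Rightarrow> complex) \<Rightarrow> bool" where
  "pre_hilbert hsmul ip \<longleftrightarrow>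
     (\<forall>c x y. hsmul c (x + y) = hsmul c x + hsmul c y) \<and>
     (\<forall>c d x. hsmul (c + d) x = hsmul c x + hsmul d x) \<and>
     (\<forall>c d x. hsmul (c * d) x = hsmul c (hsmul d x)) \<and>
     (\<forall>x. hsmul 1 x = x) \<and>
     (\<forall>x y z. ip (x + y) z = ip x z + ip y z) \<and>
     (\<forall>c x y. ip (hsmul c x) y = c * ip x y) \<and>
     (\<forall>x y. ip y x = cnj (ip x y)) \<and>
     (\<forall>x. Re (ip x x) \<ge> 0) \<and>
     (\<forall>x. ip x x = 0 \<longrightarrow> x = 0)"

definition hnorm :: "('h \<Rightarrow> 'h \<Rightarrow> complex) \<Rightarrow> 'h \<Rightarrow> real" where
  "hnorm ip x = sqrt (Re (ip x x))"

definition bounded_op :: "('h \<Rightarrow> 'h \<Rightarrow> complex) \<Rightarrow> ('h \<Rightarrow> 'h) \<Rightarrow> bool" where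
  "bounded_op ip T \<longleftrightarrow> (\<exists>C. \<forall>x. hnorm ip (T x) \<le> C * hnorm ip x)"

definition op_norm :: "('h \<Rightarrow> 'h \<Rightarrow> complex) \<Rightarrow> ('h \<Rightarrow> 'h) \<Rightarrow> real" where
  "op_norm ip T = (SUP x\<in>{x. hnorm ip x \<le> 1}. hnorm ip (T x))"

definition star_representation ::
  "(complex \<Rightarrow> 'a::real_normed_algebra \<Rightarrow> 'a) \<Rightarrow> ('a \<Rightarrow> 'a) \<Rightarrow>
   (complex \<Rightarrow> 'h::ab_group_add \<Rightarrow> 'h) \<Rightarrow> ('h \<Rightarrow> 'h \<Rightarrow> complex) \<Rightarrow> ('a \<Rightarrow> 'h \<Rightarrow> 'h) \<Rightarrow> bool" where
  "star_representation smul star hsmul ip \<pi> \<longleftrightarrow>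
     (\<forall>a x y. \<pi> a (x + y) = \<pi> a x + \<pi> a y) \<and>
     (\<forall>a c x. \<pi> a (hsmul c x) = hsmul c (\<pi> a x)) \<and>
     (\<forall>a b x. \<pi> (a + b) x = \<pi> a x + \<pi> b x) \<and>
     (\<forall>c a x. \<pi> (smul c a) x = hsmul c (\<pi> a x)) \<and>
     (\<forall>a b x. \<pi> (a * b) x = \<pi> a (\<pi> b x)) \<and>
     (\<forall>a x y. ip (\<pi> a x) y = ip x (\<pi> (star a) y))"

definition weakly_continuous_sa ::
  "('a::real_normed_algebra \<Rightarrow> 'a) \<Rightarrow> ('h \<Rightarrow> 'h \<Rightarrow> complex) \<Rightarrow> ('a \<Rightarrow> 'h \<Rightarrow> 'h) \<Rightarrow> bool" where
  "weakly_continuous_sa star ip \<pi> \<longleftrightarrow>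
     (\<forall>x. continuous_on (self_adjoint_part star) (\<lambda>a. ip (\<pi> a x) x))"

end

theory Submission
  imports Defs
begin

(* Let h be self-adjoint and T = pi(h); T is a symmetric operator on H.
   For a vector x put g_k = |T^k x|.  Cauchy-Schwarz and symmetry give the log-convexity
   g_(k+1)^2 <= g_k g_(k+2), whence |Tx|^n <= g_n |x|^(n-1), and g_n^2 = <T^(2n) x, x>.
   Weak continuity on A_sa together with homogeneity bounds the quadratic form:
   |<pi(b)x,x>| <= C_x |b| for self-adjoint b.  Hence
     |Tx|^(2n) <= C_x |h^(2n)| |x|^(2n-2),
   and taking n = m j with |h^(2mj)| <= |h^m|^(2j) and letting j grow yields
   |Tx| <= |h^m|^(1/m) |x| for every m, i.e. |pi(h)| <= r_lambda(h).  For arbitrary a,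
   |pi(a)x|^2 = <x, pi(a* a)x> <= r_lambda(a* a) |x|^2 = r_sigma(a)^2 |x|^2. *)


section \<open>Pre-Hilbert spaces\<close>

locale pre_hilbert_space =
  fixes hsmul :: "complex \<Rightarrow> 'h::ab_group_add \<Rightarrow> 'h" and ip :: "'h \<Rightarrow> 'h \<Rightarrow> complex"
  assumes pre_hilbert: "pre_hilbert hsmul ip"
begin

lemma ip_addL: "ip (x + y) z = ip x z + ip y z"
  using pre_hilbert unfolding pre_hilbert_def by iprover

lemma ip_smulL: "ip (hsmul c x) y = c * ip x y"
  using pre_hilbert unfolding pre_hilbert_def by iprover

lemma ip_sym: "ip y x = cnj (ip x y)"
  using pre_hilbert unfolding pre_hilbert_def by iprover

lemma ip_self_nonneg: "Re (ip x x) \<ge> 0"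
  using pre_hilbert unfolding pre_hilbert_def by iprover

lemma ip_self_eq_0: "ip x x = 0 \<Longrightarrow> x = 0"
  using pre_hilbert unfolding pre_hilbert_def by iprover

lemma ip_zeroL [simp]: "ip 0 y = 0"
  using ip_addL[of 0 0 y] by simp

lemma ip_addR: "ip x (y + z) = ip x y + ip x z"
  using ip_sym[of x "y + z"] ip_addL[of y z x] ip_sym[of x y] ip_sym[of x z] by simp

lemma ip_smulR: "ip x (hsmul c y) = cnj c * ip x y"
  using ip_sym[of x "hsmul c y"] ip_smulL[of c y x] ip_sym[of x y] by simp

lemma Re_ip_commute: "Re (ip y x) = Re (ip x y)"
  using ip_sym[of x y] by simp

lemma ip_zeroR [simp]: "ip x 0 = 0"
  using ip_sym[of x 0] by simp

lemma hnorm_nonneg: "hnorm ip x \<ge> 0"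
  unfolding hnorm_def using ip_self_nonneg by simp

lemma hnorm_square: "(hnorm ip x)\<^sup>2 = Re (ip x x)"
  unfolding hnorm_def using ip_self_nonneg by simp

lemma hnorm_eq_0_iff: "hnorm ip x = 0 \<longleftrightarrow> x = 0"
proof
  assume "hnorm ip x = 0"
  then have "Re (ip x x) = 0"
    using hnorm_square[of x] by simp
  moreover have "Im (ip x x) = 0"
    using ip_sym[of x x] by (metis Reals_cnj_iff complex_is_Real_iff)
  ultimately show "x = 0"
    by (intro ip_self_eq_0) (simp add: complex_eq_iff)
qed (simp add: hnorm_def)

lemma Re_ip_real_combination:
  "Re (ip (hsmul (of_real s) u + hsmul (of_real t) v) (hsmul (of_real s) u + hsmul (of_real t) v))
     = s * s * Re (ip u u) + 2 * s * t * Re (ip u v) + t * t * Re (ip v v)"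
proof -
  have "ip (hsmul (of_real s) u + hsmul (of_real t) v) (hsmul (of_real s) u + hsmul (of_real t) v)
     = of_real s * (of_real s * ip u u) + of_real s * (of_real t * ip v u)
       + (of_real t * (of_real s * ip u v) + of_real t * (of_real t * ip v v))"
    by (simp only: ip_addL ip_addR ip_smulL ip_smulR complex_cnj_complex_of_real distrib_left)
  then show ?thesis
    using Re_ip_commute[of v u] by (simp add: algebra_simps)
qed

text \<open>Cauchy-Schwarz inequality (real part version), proved by evaluating the nonnegative
  form at |v| u - |u| v.\<close>
lemma cauchy_schwarz: "Re (ip u v) \<le> hnorm ip u * hnorm ip v"
proof (cases "u = 0 \<or> v = 0")
  case True
  then show ?thesis by (auto simp: hnorm_def)
next
  case False
  define s where "s = hnorm ip u"
  define r where "r = hnorm ip v"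
  have pos: "s > 0" "r > 0"
    using False hnorm_nonneg hnorm_eq_0_iff unfolding s_def r_def by (auto simp: less_le)
  have uu: "Re (ip u u) = s * s" and vv: "Re (ip v v) = r * r"
    unfolding s_def r_def using hnorm_square by (simp_all add: power2_eq_square)
  have "0 \<le> Re (ip (hsmul (of_real r) u + hsmul (of_real (- s)) v)
                   (hsmul (of_real r) u + hsmul (of_real (- s)) v))"
    by (rule ip_self_nonneg)
  then have "0 \<le> 2 * (r * s) * (r * s - Re (ip u v))"
    unfolding Re_ip_real_combination uu vv by (simp add: algebra_simps)
  then have "Re (ip u v) \<le> r * s"
    using pos mult_pos_pos[OF pos(2) pos(1)] by (auto simp: zero_le_mult_iff)
  then show ?thesis
    unfolding s_def r_def by (simp add: mult.commute)
qed

lemma op_norm_le: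
  assumes "c \<ge> 0" and dominated: "\<And>x. hnorm ip (T x) \<le> c * hnorm ip x"
  shows "bounded_op ip T \<and> op_norm ip T \<le> c"
proof
  show "bounded_op ip T"
    unfolding bounded_op_def using dominated by blast
  have "hnorm ip (T x) \<le> c" if "hnorm ip x \<le> 1" for x
    using dominated[of x] mult_left_mono[OF that \<open>c \<ge> 0\<close>] by simp
  moreover have "hnorm ip 0 \<le> 1"
    by (simp add: hnorm_def)
  ultimately show "op_norm ip T \<le> c"
    unfolding op_norm_def by (intro cSUP_least) auto
qed


subsection \<open>Symmetric operators\<close>

context
  fixes T :: "'h \<Rightarrow> 'h"
  assumes symmetric: "\<And>x y. ip (T x) y = ip x (T y)"
begin

lemma ip_iterate_shift: "ip ((T ^^ a) x) ((T ^^ b) x) = ip x ((T ^^ (a + b)) x)"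
proof (induction a arbitrary: b)
  case (Suc a)
  have "ip ((T ^^ Suc a) x) ((T ^^ b) x) = ip ((T ^^ a) x) ((T ^^ Suc b) x)"
    by (simp only: funpow.simps comp_apply symmetric)
  also have "\<dots> = ip x ((T ^^ (Suc a + b)) x)"
    using Suc.IH[of "Suc b"] by (simp only: add_Suc_shift)
  finally show ?case .
qed simp

lemma orbit_log_convex:
  "(hnorm ip ((T ^^ Suc k) x))\<^sup>2 \<le> hnorm ip ((T ^^ k) x) * hnorm ip ((T ^^ Suc (Suc k)) x)"
proof -
  have "(hnorm ip ((T ^^ Suc k) x))\<^sup>2 = Re (ip ((T ^^ k) x) ((T ^^ Suc (Suc k)) x))"
    using hnorm_square symmetric by simp
  also have "\<dots> \<le> hnorm ip ((T ^^ k) x) * hnorm ip ((T ^^ Suc (Suc k)) x)"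
    by (rule cauchy_schwarz)
  finally show ?thesis .
qed

text \<open>Consequently the ratios g_(n+1)/g_n of the orbit norms are nondecreasing; we only need
  the comparison with the first ratio, in cross-multiplied form.\<close>
lemma orbit_ratio_mono:
  "hnorm ip ((T ^^ n) x) * hnorm ip (T x) \<le> hnorm ip ((T ^^ Suc n) x) * hnorm ip x"
proof (induction n)
  case 0
  show ?case by (simp add: mult.commute)
next
  case (Suc n)
  define a b c u z where "a = hnorm ip ((T ^^ n) x)" and "b = hnorm ip ((T ^^ Suc n) x)"
    and "c = hnorm ip ((T ^^ Suc (Suc n)) x)" and "u = hnorm ip (T x)" and "z = hnorm ip x"
  have nonneg: "a \<ge> 0" "b \<ge> 0" "c \<ge> 0" "u \<ge> 0" "z \<ge> 0"
    unfolding a_def b_def c_def u_def z_def by (simp_all add: hnorm_nonneg)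
  have convex: "b\<^sup>2 \<le> a * c"
    unfolding a_def b_def c_def by (rule orbit_log_convex)
  have IH: "a * u \<le> b * z"
    using Suc.IH unfolding a_def b_def u_def z_def by simp
  have "b * (b * u) = b\<^sup>2 * u"
    by (simp add: power2_eq_square)
  also have "\<dots> \<le> c * (a * u)"
    using mult_right_mono[OF convex nonneg(4)] by (simp add: mult_ac)
  also have "\<dots> \<le> b * (c * z)"
    using mult_left_mono[OF IH nonneg(3)] by (simp add: mult_ac)
  finally have "b * (b * u) \<le> b * (c * z)" .
  then have "b * u \<le> c * z"
    using nonneg by (cases "b = 0") (auto simp: mult_le_cancel_left)
  then show ?case
    unfolding b_def c_def u_def z_def by simp
qed

lemma orbit_power_bound: "hnorm ip (T x) ^ Suc n \<le> hnorm ip ((T ^^ Suc n) x) * hnorm ip x ^ n"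
proof (induction n)
  case (Suc n)
  have "hnorm ip (T x) ^ Suc (Suc n) = hnorm ip (T x) ^ Suc n * hnorm ip (T x)"
    by (simp only: power_Suc2)
  also have "\<dots> \<le> (hnorm ip ((T ^^ Suc n) x) * hnorm ip (T x)) * hnorm ip x ^ n"
    using mult_right_mono[OF Suc.IH hnorm_nonneg] by (simp add: mult_ac)
  also have "\<dots> \<le> (hnorm ip ((T ^^ Suc (Suc n)) x) * hnorm ip x) * hnorm ip x ^ n"
    by (intro mult_right_mono orbit_ratio_mono) (simp add: hnorm_nonneg)
  finally show ?case
    by (simp add: mult_ac)
qed simp

lemma symmetric_power_bound:
  "hnorm ip (T x) ^ (2 * Suc n) \<le> cmod (ip ((T ^^ (2 * Suc n)) x) x) * hnorm ip x ^ (2 * n)"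
proof -
  have "(hnorm ip ((T ^^ Suc n) x))\<^sup>2 = Re (ip ((T ^^ Suc n) x) ((T ^^ Suc n) x))"
    by (rule hnorm_square)
  also have "\<dots> = Re (ip x ((T ^^ (2 * Suc n)) x))"
    by (simp only: ip_iterate_shift mult_2)
  also have "\<dots> = Re (ip ((T ^^ (2 * Suc n)) x) x)"
    by (rule Re_ip_commute)
  finally have square: "(hnorm ip ((T ^^ Suc n) x))\<^sup>2 = Re (ip ((T ^^ (2 * Suc n)) x) x)" .
  have "hnorm ip (T x) ^ (2 * Suc n) = (hnorm ip (T x) ^ Suc n)\<^sup>2"
    by (metis power_mult mult.commute)
  also have "\<dots> \<le> (hnorm ip ((T ^^ Suc n) x) * hnorm ip x ^ n)\<^sup>2"
    by (intro power_mono orbit_power_bound) (simp add: hnorm_nonneg)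
  also have "\<dots> = Re (ip ((T ^^ (2 * Suc n)) x) x) * hnorm ip x ^ (2 * n)"
    by (simp only: power_mult_distrib power_even_eq square)
  also have "\<dots> \<le> cmod (ip ((T ^^ (2 * Suc n)) x) x) * hnorm ip x ^ (2 * n)"
    by (intro mult_right_mono complex_Re_le_cmod) (simp add: hnorm_nonneg)
  finally show ?thesis .
qed

end

end


lemma le_of_frequent_power_bound:
  fixes \<rho> \<mu> K :: real
  assumes "\<rho> \<ge> 0" "\<mu> \<ge> 0" and frequent: "\<And>n. \<exists>N\<ge>n. \<rho> ^ N \<le> K * \<mu> ^ N"
  shows "\<rho> \<le> \<mu>"
proof (rule ccontr)
  assume "\<not> \<rho> \<le> \<mu>"
  then have less: "\<mu> < \<rho>" by simp
  show False
  proof (cases "\<mu> = 0")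
    case True
    obtain N where "N \<ge> 1" "\<rho> ^ N \<le> K * \<mu> ^ N"
      using frequent by blast
    then have "\<rho> ^ N \<le> 0"
      using True by (simp add: power_0_left)
    moreover have "\<rho> ^ N > 0"
      using less True by simp
    ultimately show False
      by simp
  next
    case False
    then have "\<mu> > 0" "\<rho> / \<mu> > 1"
      using assms less by simp_all
    obtain n where n: "max K 1 < (\<rho> / \<mu>) ^ n"
      using real_arch_pow[OF \<open>\<rho> / \<mu> > 1\<close>] by blast
    obtain N where "N \<ge> n" and N: "\<rho> ^ N \<le> K * \<mu> ^ N"
      using frequent by blast
    have "(\<rho> / \<mu>) ^ n \<le> (\<rho> / \<mu>) ^ N"
      using \<open>N \<ge> n\<close> \<open>\<rho> / \<mu> > 1\<close> by (simp add: power_increasing)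
    also have "\<dots> \<le> K"
      using N \<open>\<mu> > 0\<close> by (simp add: power_divide divide_le_eq)
    finally show False
      using n by simp
  qed
qed

text \<open>A map that is continuous at 0 and positively homogeneous on a cone is bounded there
  by a multiple of the norm.  This turns weak continuity into a quantitative bound.\<close>
lemma homogeneous_continuous_bound:
  fixes f :: "'a::real_normed_vector \<Rightarrow> 'b::real_normed_vector"
  assumes cont: "continuous_on S f" and "0 \<in> S"
    and cone: "\<And>t b. b \<in> S \<Longrightarrow> t > 0 \<Longrightarrow> t *\<^sub>R b \<in> S"
    and homogeneous: "\<And>t b. b \<in> S \<Longrightarrow> t > 0 \<Longrightarrow> f (t *\<^sub>R b) = t *\<^sub>R f b"
  shows "\<exists>C\<ge>0. \<forall>b\<in>S. norm (f b) \<le> C * norm b"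
proof -
  have f0: "f 0 = 0"
    using homogeneous[OF \<open>0 \<in> S\<close>, of 2] by (simp add: scaleR_2)
  have "\<forall>e>0. \<exists>d>0. \<forall>b\<in>S. dist b 0 < d \<longrightarrow> dist (f b) (f 0) < e"
    using cont \<open>0 \<in> S\<close> unfolding continuous_on_iff by (rule bspec)
  then obtain d where "d > 0" and d: "\<forall>b\<in>S. dist b 0 < d \<longrightarrow> dist (f b) (f 0) < 1"
    using zero_less_one by blast
  have small: "\<And>b. b \<in> S \<Longrightarrow> norm b < d \<Longrightarrow> norm (f b) < 1"
    using d f0 by (simp add: dist_norm)
  have "norm (f b) \<le> (2 / d) * norm b" if "b \<in> S" for b
  proof (cases "b = 0")
    case False
    define t where "t = d / (2 * norm b)"
    have "t > 0"
      using \<open>d > 0\<close> False unfolding t_def by simp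
    have "norm (t *\<^sub>R b) < d"
      using \<open>d > 0\<close> False unfolding t_def by simp
    then have "t * norm (f b) < 1"
      using small[OF cone[OF that \<open>t > 0\<close>]] homogeneous[OF that \<open>t > 0\<close>] \<open>t > 0\<close> by simp
    then show ?thesis
      using \<open>d > 0\<close> False unfolding t_def by (simp add: field_simps)
  qed (simp add: f0)
  then show ?thesis
    using \<open>d > 0\<close> by (intro exI[of _ "2 / d"]) auto
qed

lemma apow_Suc: "n \<ge> 1 \<Longrightarrow> apow a (Suc n) = a * apow a n"
  by (cases n) auto

lemma apow_add:
  fixes a :: "'a::semigroup_mult"
  assumes "n \<ge> 1" "m \<ge> 1"
  shows "apow a (n + m) = apow a n * apow a m"
  using assms(1)
proof (induction n rule: dec_induct)
  case base
  then show ?case using apow_Suc[OF assms(2)] by simp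
next
  case (step n)
  then show ?case using apow_Suc[of "n + m" a] apow_Suc[of n a] by (simp add: mult.assoc)
qed

lemma norm_apow_mult:
  fixes a :: "'a::real_normed_algebra"
  assumes "m \<ge> 1" "j \<ge> 1"
  shows "norm (apow a (m * j)) \<le> norm (apow a m) ^ j"
  using assms(2)
proof (induction j rule: dec_induct)
  case (step j)
  have "norm (apow a (m * Suc j)) = norm (apow a (m * j) * apow a m)"
    using apow_add[of "m * j" m a] step.hyps assms(1) by (simp add: add.commute)
  also have "\<dots> \<le> norm (apow a m) ^ j * norm (apow a m)"
    using norm_mult_ineq step.IH by (metis mult_right_mono norm_ge_zero order_trans)
  finally show ?case
    by (simp add: mult.commute)
qed simp

lemma r_lambda_nonneg: "r_lambda a \<ge> 0"
  unfolding r_lambda_def by (rule cINF_greatest) auto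

lemma r_sigma_nonneg: "r_sigma star a \<ge> 0"
  unfolding r_sigma_def using r_lambda_nonneg by simp


section \<open>Representations of normed *-algebras\<close>

locale star_rep = pre_hilbert_space hsmul ip
  for hsmul :: "complex \<Rightarrow> 'h::ab_group_add \<Rightarrow> 'h" and ip :: "'h \<Rightarrow> 'h \<Rightarrow> complex" +
  fixes smul :: "complex \<Rightarrow> 'a::real_normed_algebra \<Rightarrow> 'a" and star :: "'a \<Rightarrow> 'a"
    and \<pi> :: "'a \<Rightarrow> 'h \<Rightarrow> 'h"
  assumes star_algebra: "normed_star_algebra smul star"
    and representation: "star_representation smul star hsmul ip \<pi>"
begin

lemma smul_real: "smul (of_real r) a = r *\<^sub>R a"
  using star_algebra unfolding normed_star_algebra_def complex_normed_algebra_def by iprover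

lemma star_smul: "star (smul c a) = smul (cnj c) (star a)"
  using star_algebra unfolding normed_star_algebra_def by iprover

lemma star_mult: "star (a * b) = star b * star a"
  using star_algebra unfolding normed_star_algebra_def by iprover

lemma star_star: "star (star a) = a"
  using star_algebra unfolding normed_star_algebra_def by iprover

lemma pi_add_vector: "\<pi> a (x + y) = \<pi> a x + \<pi> a y"
  using representation unfolding star_representation_def by iprover

lemma pi_smul: "\<pi> (smul c a) x = hsmul c (\<pi> a x)"
  using representation unfolding star_representation_def by iprover

lemma pi_mult: "\<pi> (a * b) x = \<pi> a (\<pi> b x)"
  using representation unfolding star_representation_def by iprover

lemma pi_adjoint: "ip (\<pi> a x) y = ip x (\<pi> (star a) y)"
  using representation unfolding star_representation_def by iprover

lemma pi_zero_vector: "\<pi> a 0 = 0"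
  using pi_add_vector[of a 0 0] by simp

lemma star_scaleR: "star (r *\<^sub>R a) = r *\<^sub>R star a"
  using star_smul[of "of_real r" a] by (simp add: smul_real)

lemma pi_scaleR: "\<pi> (r *\<^sub>R a) x = hsmul (of_real r) (\<pi> a x)"
  using pi_smul[of "of_real r" a x] by (simp add: smul_real)

lemma self_adjoint_apow:
  assumes h: "star h = h" shows "star (apow h n) = apow h n"
proof (induction n)
  case (Suc n)
  show ?case
  proof (cases "n = 0")
    case False
    then have "star (apow h (Suc n)) = star (apow h n * h)"
      using apow_add[of n 1 h] by simp
    also have "\<dots> = apow h (Suc n)"
      using Suc.IH h False apow_Suc[of n h] by (simp add: star_mult)
    finally show ?thesis .
  qed (simp add: h)
qed (simp add: h)

lemma pi_apow: "n \<ge> 1 \<Longrightarrow> \<pi> (apow h n) x = (\<pi> h ^^ n) x"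
proof (induction n rule: dec_induct)
  case (step n)
  then show ?case using apow_Suc[of n h] by (simp add: pi_mult)
qed simp

lemma quadratic_form_bound:
  assumes "weakly_continuous_sa star ip \<pi>"
  shows "\<exists>C\<ge>0. \<forall>b\<in>self_adjoint_part star. cmod (ip (\<pi> b x) x) \<le> C * norm b"
proof (rule homogeneous_continuous_bound)
  show "continuous_on (self_adjoint_part star) (\<lambda>b. ip (\<pi> b x) x)"
    using assms unfolding weakly_continuous_sa_def by blast
  show "0 \<in> self_adjoint_part star"
    using star_scaleR[of 0 0] by (simp add: self_adjoint_part_def)
  show "t *\<^sub>R b \<in> self_adjoint_part star" if "b \<in> self_adjoint_part star" for t b
    using that by (simp add: self_adjoint_part_def star_scaleR)
  show "ip (\<pi> (t *\<^sub>R b) x) x = t *\<^sub>R ip (\<pi> b x) x" for t b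
    by (simp add: pi_scaleR ip_smulL scaleR_conv_of_real)
qed

lemma self_adjoint_power_estimate:
  assumes h: "star h = h" and "C \<ge> 0"
    and C: "\<And>b. star b = b \<Longrightarrow> cmod (ip (\<pi> b x) x) \<le> C * norm b"
  shows "hnorm ip (\<pi> h x) ^ (2 * Suc k) \<le> C * norm (apow h (2 * Suc k)) * hnorm ip x ^ (2 * k)"
proof -
  have symmetric: "\<And>y z. ip (\<pi> h y) z = ip y (\<pi> h z)"
    using pi_adjoint h by simp
  have "(\<pi> h ^^ (2 * Suc k)) x = \<pi> (apow h (2 * Suc k)) x"
    by (rule pi_apow[symmetric]) simp
  then have "cmod (ip ((\<pi> h ^^ (2 * Suc k)) x) x) \<le> C * norm (apow h (2 * Suc k))"
    using C[OF self_adjoint_apow[OF h]] by (simp only:)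
  then show ?thesis
    using symmetric_power_bound[OF symmetric, of x k]
    by (meson mult_right_mono order_trans zero_le_power hnorm_nonneg)
qed

text \<open>For self-adjoint h, |pi(h)x| <= |h^m|^(1/m) |x|: apply the previous estimate with
  exponents 2 m (n + 1), use |h^(m j)| <= |h^m|^j, and let n grow.\<close>
lemma self_adjoint_bound_power:
  assumes h: "star h = h" and "m \<ge> 1" and "C \<ge> 0"
    and C: "\<And>b. star b = b \<Longrightarrow> cmod (ip (\<pi> b x) x) \<le> C * norm b"
  shows "hnorm ip (\<pi> h x) \<le> norm (apow h m) powr (1 / real m) * hnorm ip x"
proof (cases "x = 0")
  case True
  then show ?thesis
    by (simp add: pi_zero_vector hnorm_def)
next
  case False
  define g0 where "g0 = hnorm ip x"
  define \<mu> where "\<mu> = norm (apow h m) powr (1 / real m)"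
  have "g0 > 0"
    using False hnorm_nonneg[of x] hnorm_eq_0_iff[of x] unfolding g0_def by linarith
  have "\<mu> \<ge> 0"
    unfolding \<mu>_def by simp
  have norm_apow_m: "norm (apow h m) = \<mu> ^ m"
  proof (cases "apow h m = 0")
    case False
    then show ?thesis
      using \<open>m \<ge> 1\<close> unfolding \<mu>_def by (simp add: powr_realpow[symmetric] powr_powr)
  qed (use \<open>m \<ge> 1\<close> in \<open>simp add: \<mu>_def\<close>)
  have "hnorm ip (\<pi> h x) \<le> \<mu> * g0"
  proof (rule le_of_frequent_power_bound[where K = "C / g0\<^sup>2"])
    fix n
    obtain k where k: "m * Suc n = Suc k"
      using \<open>m \<ge> 1\<close> by (cases "m * Suc n") auto
    have "Suc n \<le> m * Suc n"
      using mult_le_mono1[OF \<open>m \<ge> 1\<close>, of "Suc n"] by simp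
    then have "n \<le> 2 * Suc k"
      unfolding k by simp
    have exponent: "m * (2 * Suc n) = 2 * Suc k"
      using k by simp
    have "norm (apow h (2 * Suc k)) \<le> \<mu> ^ (2 * Suc k)"
      using norm_apow_mult[OF \<open>m \<ge> 1\<close>, of "2 * Suc n" h]
      unfolding norm_apow_m power_mult[symmetric] exponent by simp
    then have "hnorm ip (\<pi> h x) ^ (2 * Suc k) \<le> C * \<mu> ^ (2 * Suc k) * g0 ^ (2 * k)"
      using self_adjoint_power_estimate[OF h \<open>C \<ge> 0\<close> C, of k] \<open>C \<ge> 0\<close> \<open>g0 > 0\<close>
      unfolding g0_def by (meson mult_left_mono mult_right_mono order_trans zero_le_power hnorm_nonneg)
    also have "\<dots> = C / g0\<^sup>2 * (\<mu> * g0) ^ (2 * Suc k)"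
      using \<open>g0 > 0\<close> by (simp add: power_mult_distrib power_add power2_eq_square field_simps)
    finally show "\<exists>N\<ge>n. hnorm ip (\<pi> h x) ^ N \<le> C / g0\<^sup>2 * (\<mu> * g0) ^ N"
      using \<open>n \<le> 2 * Suc k\<close> by blast
  qed (use \<open>\<mu> \<ge> 0\<close> \<open>g0 > 0\<close> hnorm_nonneg in auto)
  then show ?thesis
    unfolding \<mu>_def g0_def .
qed

lemma self_adjoint_bound:
  assumes h: "star h = h" and "C \<ge> 0"
    and C: "\<And>b. star b = b \<Longrightarrow> cmod (ip (\<pi> b x) x) \<le> C * norm b"
  shows "hnorm ip (\<pi> h x) \<le> r_lambda h * hnorm ip x"
proof (cases "x = 0")
  case True
  then show ?thesis
    by (simp add: pi_zero_vector hnorm_def)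
next
  case False
  then have "hnorm ip x > 0"
    using hnorm_nonneg[of x] hnorm_eq_0_iff[of x] by linarith
  have "hnorm ip (\<pi> h x) / hnorm ip x \<le> r_lambda h"
    unfolding r_lambda_def
  proof (rule cINF_greatest)
    fix m :: nat
    assume "m \<in> {1..}"
    then show "hnorm ip (\<pi> h x) / hnorm ip x \<le> norm (apow h m) powr (1 / real m)"
      using self_adjoint_bound_power[OF h _ \<open>C \<ge> 0\<close> C, of m] \<open>hnorm ip x > 0\<close>
      by (simp add: divide_le_eq)
  qed simp
  then show ?thesis
    using \<open>hnorm ip x > 0\<close> by (simp add: divide_le_eq)
qed

text \<open>The C*-type estimate |pi(a)x|^2 = <x, pi(a* a)x> <= r_lambda(a* a) |x|^2.\<close>
lemma representation_bound:
  assumes "weakly_continuous_sa star ip \<pi>"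
  shows "hnorm ip (\<pi> a x) \<le> r_sigma star a * hnorm ip x"
proof -
  obtain C where "C \<ge> 0" and C: "\<And>b. star b = b \<Longrightarrow> cmod (ip (\<pi> b x) x) \<le> C * norm b"
    using quadratic_form_bound[OF assms, of x] by (auto simp: self_adjoint_part_def)
  have self_adjoint: "star (star a * a) = star a * a"
    by (simp add: star_mult star_star)
  have "(hnorm ip (\<pi> a x))\<^sup>2 = Re (ip x (\<pi> (star a * a) x))"
    by (simp add: hnorm_square pi_adjoint pi_mult)
  also have "\<dots> \<le> hnorm ip x * hnorm ip (\<pi> (star a * a) x)"
    by (rule cauchy_schwarz)
  also have "\<dots> \<le> hnorm ip x * (r_lambda (star a * a) * hnorm ip x)"
    using self_adjoint_bound[OF self_adjoint \<open>C \<ge> 0\<close> C] by (simp add: mult_left_mono hnorm_nonneg)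
  finally have "(hnorm ip (\<pi> a x))\<^sup>2 \<le> (r_sigma star a * hnorm ip x)\<^sup>2"
    unfolding r_sigma_def using r_lambda_nonneg[of "star a * a"]
    by (simp add: power_mult_distrib power2_eq_square mult_ac)
  then show ?thesis
    using r_sigma_nonneg hnorm_nonneg by (meson power2_le_imp_le mult_nonneg_nonneg)
qed

end


theorem theorem22p5:
  fixes smul :: "complex \<Rightarrow> 'a::real_normed_algebra \<Rightarrow> 'a"
    and star :: "'a \<Rightarrow> 'a"
    and hsmul :: "complex \<Rightarrow> 'h::ab_group_add \<Rightarrow> 'h"
    and ip :: "'h \<Rightarrow> 'h \<Rightarrow> complex"
    and \<pi> :: "'a \<Rightarrow> 'h \<Rightarrow> 'h"
  assumes "normed_star_algebra smul star"
    and "pre_hilbert hsmul ip"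
    and "star_representation smul star hsmul ip \<pi>"
    and "weakly_continuous_sa star ip \<pi>"
  shows "\<forall>a. bounded_op ip (\<pi> a) \<and> op_norm ip (\<pi> a) \<le> r_sigma star a"
proof -
  interpret star_rep hsmul ip smul star \<pi>
    using assms by (simp add: star_rep_def star_rep_axioms_def pre_hilbert_space_def)
  show ?thesis
    using op_norm_le[OF r_sigma_nonneg representation_bound[OF assms(4)]] by blast
qed

end
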